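(* Let $k$ be a positive integer or $k=\infty$, let $m\ge1$, and let $\lambda=(\lambda_1,\dots,\lambda_m)$, $\mu=(\mu_1,\dots,\mu_m)$ be integer sequences with $\mu_i\le\lambda_i$ for all $i$, where $\mu$ is decreasing and all $\mu_i$ are even. Suppose either (a) $\lambda$ is increasing and all $\lambda_i$ are odd, or (b) $\lambda$ is decreasing and all $\lambda_i$ are even. Then the generating function $\sum_{\mathcal T}w_{AV}(\mathcal T)$ over all alternating tableaux $\mathcal T$ of shape $\lambda/\mu$ with all entries in $\{1,\dots,k\}$ (all positive integers if $k=\infty$) equals $$\det\Big(\mathrm{GF}\big(\mathcal A_{\lambda_j-\mu_i}^{(k)};w_{AV}\big)\Big)_{1\le i,j\le m}.$$
   Context: An alternating tableau of shape $\lambda/\mu$ (with $\mu_i$ even, $\mu_i\le\lambda_i$) is an array of integers $(a_{i,j})$, $1\le i\le m$, $\mu_i<j\le\lambda_i$ (row $i$ occupies columns $\mu_i+1,\dots,\lambda_i$), such that $a_{i,2j-1}\le a_{i,2j}$ and $a_{i,2j}\ge a_{i,2j+1}$, and $a_{i+1,2j}<a_{i,2j+1}>a_{i+1,2j+2}$, for all $i,j$ whenever the entries involved are defined. With indeterminates $A_1,A_2,\dots,V_1,V_2,\dots$, the weight is $w_{AV}(\mathcal T)=\prod_{i,j}A_{a_{i,2j}}V_{a_{i,2j-1}}$ (entries in even columns give $A$'s, in odd columns $V$'s). $\mathcal A_n^{(k)}$ is the set of integer sequences $(a_1,\dots,a_n)$ with entries in $\{1,\dots,k\}$ and $a_1\le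 a_2\ge a_3\le a_4\ge\cdots$; its weight is $w_{AV}=\prod_i A_{a_{2i}}\prod_i V_{a_{2i-1}}$; $\mathcal A_0^{(k)}$ consists of the empty sequence (weight $1$) and $\mathcal A_n^{(k)}=\emptyset$ for $n<0$. $\mathrm{GF}(\mathcal O;w)=\sum_{t\in\mathcal O}w(t)$; for $k=\infty$ these are formal power series. *)

theory Defs
  imports "HOL-Library.Multiset" "HOL-Library.Extended_Nat" "HOL-Combinatorics.Permutations"
begin

text \<open>Formal power series in the commuting indeterminates A_1, A_2, ... and V_1, V_2, ...
  with integer coefficients.  A monomial prod_a A_a^(e_a) prod_v V_v^(f_v) is encoded by the
  pair of multisets (A-indices, V-indices); a series is its coefficient function.\<close>

type_synonym monom = "int multiset \<times> int multiset"
type_synonym gfs = "monom \<Rightarrow> int"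

definition gf_one :: gfs where
  "gf_one M = (if M = ({#}, {#}) then 1 else 0)"

text \<open>Product of formal power series (Cauchy product; the set of splittings is finite).\<close>
definition gf_mult :: "gfs \<Rightarrow> gfs \<Rightarrow> gfs" where
  "gf_mult f g M = (\<Sum>(M1, M2) \<in> {(M1, M2). fst M1 + fst M2 = fst M \<and> snd M1 + snd M2 = snd M}. f M1 * g M2)"

definition gf_prod_list :: "gfs list \<Rightarrow> gfs" where
  "gf_prod_list fs = foldr gf_mult fs gf_one"

definition gf_det :: "nat \<Rightarrow> (nat \<Rightarrow> nat \<Rightarrow> gfs) \<Rightarrow> gfs" where
  "gf_det m F M = (\<Sum>\<sigma> \<in> {\<sigma>. \<sigma> permutes {1..m}}.
      sign \<sigma> * gf_prod_list (map (\<lambda>i. F i (\<sigma> i)) [1..<m+1]) M)"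

definition in_range :: "enat \<Rightarrow> int \<Rightarrow> bool" where
  "in_range k x \<longleftrightarrow> 1 \<le> x \<and> (case k of enat n \<Rightarrow> x \<le> int n | \<infinity> \<Rightarrow> True)"

text \<open>Alternating sequences A_n^(k): lists (a_1,...,a_n) (stored 0-indexed) with
  a_1 \<le> a_2 \<ge> a_3 \<le> a_4 \<ge> ...; empty for n < 0.\<close>
definition alt_seqs :: "enat \<Rightarrow> int \<Rightarrow> int list set" where
  "alt_seqs k n = {s. int (length s) = n \<and> (\<forall>x \<in> set s. in_range k x) \<and>
      (\<forall>p. Suc p < length s \<longrightarrow>
         (if even p then s ! p \<le> s ! Suc p else s ! p \<ge> s ! Suc p))}"

text \<open>Weight w_AV: entries at even (1-indexed) positions give A's, at odd positions V's.\<close>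
definition seq_weight :: "int list \<Rightarrow> monom" where
  "seq_weight s = (mset (map (\<lambda>p. s ! p) (filter odd [0..<length s])),
                   mset (map (\<lambda>p. s ! p) (filter even [0..<length s])))"

definition gf_alt :: "enat \<Rightarrow> int \<Rightarrow> gfs" where
  "gf_alt k n M = int (card {s \<in> alt_seqs k n. seq_weight s = M})"

definition cells :: "nat \<Rightarrow> (nat \<Rightarrow> int) \<Rightarrow> (nat \<Rightarrow> int) \<Rightarrow> (nat \<times> int) set" where
  "cells m lam mu = {(i, c). 1 \<le> i \<and> i \<le> m \<and> mu i < c \<and> c \<le> lam i}"

text \<open>Alternating tableaux of shape lambda/mu with entries in {1..k}; a tableau is a
  function (row, column) \<mapsto> entry, which is 0 outside the shape.\<close>
definition alt_tableaux :: "enat \<Rightarrow> nat \<Rightarrow> (nat \<Rightarrow> int) \<Rightarrow> (nat \<Rightarrow> int) \<Rightarrow> (nat \<Rightarrow> int \<Rightarrow> int) set" where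
  "alt_tableaux k m lam mu = {a.
     (\<forall>i c. (i, c) \<notin> cells m lam mu \<longrightarrow> a i c = 0) \<and>
     (\<forall>(i, c) \<in> cells m lam mu. in_range k (a i c)) \<and>
     (\<forall>i c. (i, c) \<in> cells m lam mu \<and> (i, c + 1) \<in> cells m lam mu \<longrightarrow>
        (if odd c then a i c \<le> a i (c + 1) else a i c \<ge> a i (c + 1))) \<and>
     (\<forall>i c. odd c \<and> (i, c) \<in> cells m lam mu \<and> (i + 1, c - 1) \<in> cells m lam mu \<longrightarrow>
        a (i + 1) (c - 1) < a i c) \<and>
     (\<forall>i c. odd c \<and> (i, c) \<in> cells m lam mu \<and> (i + 1, c + 1) \<in> cells m lam mu \<longrightarrow>
        a (i + 1) (c + 1) < a i c)}"

definition tab_weight :: "nat \<Rightarrow> (nat \<Rightarrow> int) \<Rightarrow> (nat \<Rightarrow> int) \<Rightarrow> (nat \<Rightarrow> int \<Rightarrow> int) \<Rightarrow> monom" where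
  "tab_weight m lam mu a =
     ((\<Sum>(i, c) \<in> {(i, c) \<in> cells m lam mu. even c}. {# a i c #}),
      (\<Sum>(i, c) \<in> {(i, c) \<in> cells m lam mu. odd c}. {# a i c #}))"

definition gf_tab :: "enat \<Rightarrow> nat \<Rightarrow> (nat \<Rightarrow> int) \<Rightarrow> (nat \<Rightarrow> int) \<Rightarrow> gfs" where
  "gf_tab k m lam mu M = int (card {a \<in> alt_tableaux k m lam mu. tab_weight m lam mu a = M})"

end

theory Submission
  imports Defs "HOL-Library.Product_Plus"
begin

text \<open>Expanding the determinant, the term of a permutation \<open>\<sigma>\<close> counts fillings of
  the rows \<open>mu i < c \<le> lam (\<sigma> i)\<close> by alternating sequences; as all \<open>mu i\<close> are even,
  the alternation of a row matches the parity of its columns. Call two adjacent rows crossing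
  at a pair of columns if a row ends there or the column inequality of a tableau fails there.
  Exchanging the tails of the two rows after the leftmost crossing keeps both rows alternating
  and the weight unchanged, multiplies \<open>\<sigma>\<close> by a transposition and does not move the chosen
  crossing, so it is a sign-reversing involution. Its fixed points are the crossing-free
  fillings; by the monotonicity and parity conditions on \<open>lam\<close> these have \<open>\<sigma> = id\<close>, and
  they are exactly the alternating tableaux of shape \<open>lam/mu\<close>.\<close>

definition counting_gf :: "'a set \<Rightarrow> ('a \<Rightarrow> monom) \<Rightarrow> gfs" where
  "counting_gf A w M = int (card {x \<in> A. w x = M})"

definition finite_fibres :: "'a set \<Rightarrow> ('a \<Rightarrow> monom) \<Rightarrow> bool" where
  "finite_fibres A w \<longleftrightarrow> (\<forall>M. finite {x \<in> A. w x = M})"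

lemma finite_submultisets: "finite {A. A \<subseteq># N}"
proof (rule finite_subset)
  show "{A. A \<subseteq># N} \<subseteq> (\<Union>n\<le>size N. multisets_of_size (set_mset N) n)"
    by (auto simp: multisets_of_size_def dest: mset_subset_eqD size_mset_mono)
  show "finite (\<Union>n\<le>size N. multisets_of_size (set_mset N) n)"
    by (intro finite_UN_I finite_atMost finite_multisets_of_size finite_set_mset)
qed

lemma finite_summand_pairs: "finite {(M1, M2). M1 + M2 = (M :: monom)}"
proof -
  have "{(M1, M2). M1 + M2 = M} \<subseteq> (\<lambda>X. (X, M - X)) ` ({A. A \<subseteq># fst M} \<times> {B. B \<subseteq># snd M})"
  proof
    fix P :: "monom \<times> monom"
    assume "P \<in> {(M1, M2). M1 + M2 = M}"
    then obtain M1 M2 where P: "P = (M1, M2)" and sum: "M1 + M2 = M" by auto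
    have "M2 = M - M1" "fst M1 \<subseteq># fst M" "snd M1 \<subseteq># snd M"
      unfolding sum[symmetric] by (simp_all add: prod_eq_iff)
    then show "P \<in> (\<lambda>X. (X, M - X)) ` ({A. A \<subseteq># fst M} \<times> {B. B \<subseteq># snd M})"
      unfolding P by (intro image_eqI[where x = M1]) (simp_all add: mem_Times_iff)
  qed
  then show ?thesis
    by (rule finite_subset) (intro finite_imageI finite_cartesian_product finite_submultisets)
qed

lemma gf_mult_eq: "gf_mult f g M = (\<Sum>(M1, M2) \<in> {(M1, M2). M1 + M2 = M}. f M1 * g M2)"
  unfolding gf_mult_def by (simp add: prod_eq_iff)

lemma gf_mult_counting_gf:
  assumes "finite_fibres A wa" and "finite_fibres B wb"
  shows "gf_mult (counting_gf A wa) (counting_gf B wb) = counting_gf (A \<times> B) (\<lambda>(x, y). wa x + wb y)"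
    and "finite_fibres (A \<times> B) (\<lambda>(x, y). wa x + wb y)"
proof -
  let ?w = "\<lambda>(x, y). wa x + wb y" and ?S = "\<lambda>M. {(M1, M2). M1 + M2 = (M :: monom)}"
  let ?Q = "\<lambda>P. {x \<in> A. wa x = fst P} \<times> {y \<in> B. wb y = snd P}"
  have fibre_eq: "{p \<in> A \<times> B. ?w p = M} = (\<Union>P \<in> ?S M. ?Q P)" for M
  proof (intro set_eqI iffI)
    fix z assume "z \<in> {p \<in> A \<times> B. ?w p = M}"
    then show "z \<in> (\<Union>P \<in> ?S M. ?Q P)"
      by (intro UN_I[of "(wa (fst z), wb (snd z))"]) (auto simp: case_prod_beta)
  qed auto
  have finQ: "finite (?Q P)" for P
    using assms unfolding finite_fibres_def by blast
  have disjQ: "?Q P \<inter> ?Q P' = {}" if "P \<noteq> P'" for P P'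
    using that by (auto simp: prod_eq_iff)
  show "finite_fibres (A \<times> B) ?w"
    unfolding finite_fibres_def fibre_eq using finite_summand_pairs finQ by blast
  show "gf_mult (counting_gf A wa) (counting_gf B wb) = counting_gf (A \<times> B) ?w"
  proof
    fix M
    have "card (\<Union>P \<in> ?S M. ?Q P) = (\<Sum>P \<in> ?S M. card (?Q P))"
      by (rule card_UN_disjoint[OF finite_summand_pairs]) (use finQ disjQ in blast)+
    then have "counting_gf (A \<times> B) ?w M = int (\<Sum>P \<in> ?S M. card (?Q P))"
      unfolding counting_gf_def fibre_eq by simp
    also have "\<dots> = gf_mult (counting_gf A wa) (counting_gf B wb) M"
      unfolding gf_mult_eq counting_gf_def by (simp add: case_prod_beta card_cartesian_product)
    finally show "gf_mult (counting_gf A wa) (counting_gf B wb) M = counting_gf (A \<times> B) ?w M" ..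
  qed
qed

lemma counting_gf_bij_betw:
  assumes f: "bij_betw f A B" and w: "\<And>x. x \<in> A \<Longrightarrow> wB (f x) = wA x"
  shows "counting_gf B wB = counting_gf A wA"
    and "finite_fibres A wA \<Longrightarrow> finite_fibres B wB"
proof -
  have fibre: "bij_betw f {x \<in> A. wA x = M} {y \<in> B. wB y = M}" for M
  proof -
    have "f ` {x \<in> A. wA x = M} = {y \<in> B. wB y = M}"
    proof (intro equalityI subsetI)
      fix y assume "y \<in> f ` {x \<in> A. wA x = M}"
      then show "y \<in> {y \<in> B. wB y = M}"
        using w bij_betw_apply[OF f] by auto
    next
      fix y assume y: "y \<in> {y \<in> B. wB y = M}"
      then obtain x where "x \<in> A" "y = f x"
        using f unfolding bij_betw_def by auto
      with y w show "y \<in> f ` {x \<in> A. wA x = M}" by auto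
    qed
    moreover have "inj_on f {x \<in> A. wA x = M}"
      using f unfolding bij_betw_def by (auto intro: inj_on_subset)
    ultimately show ?thesis unfolding bij_betw_def by blast
  qed
  show "counting_gf B wB = counting_gf A wA"
    unfolding counting_gf_def by (simp add: fun_eq_iff bij_betw_same_card[OF fibre])
  show "finite_fibres A wA \<Longrightarrow> finite_fibres B wB"
    unfolding finite_fibres_def using fibre bij_betw_finite by blast
qed

lemma counting_gf_singleton: "counting_gf {x} w M = (if w x = M then 1 else 0)"
  by (simp add: counting_gf_def Collect_conv_if)

lemma gf_alt_eq_counting_gf: "gf_alt k n = counting_gf (alt_seqs k n) seq_weight"
  by (simp add: fun_eq_iff gf_alt_def counting_gf_def)

definition skew_cells :: "nat set \<Rightarrow> (nat \<Rightarrow> int) \<Rightarrow> (nat \<Rightarrow> int) \<Rightarrow> (nat \<times> int) set" where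
  "skew_cells R lam mu = {(i, c). i \<in> R \<and> mu i < c \<and> c \<le> lam i}"

definition row_fillings :: "enat \<Rightarrow> nat set \<Rightarrow> (nat \<Rightarrow> int) \<Rightarrow> (nat \<Rightarrow> int) \<Rightarrow> (nat \<Rightarrow> int \<Rightarrow> int) set" where
  "row_fillings k R lam mu = {a. (\<forall>i \<in> R. mu i \<le> lam i) \<and>
     (\<forall>i c. (i, c) \<notin> skew_cells R lam mu \<longrightarrow> a i c = 0) \<and>
     (\<forall>(i, c) \<in> skew_cells R lam mu. in_range k (a i c)) \<and>
     (\<forall>i c. (i, c) \<in> skew_cells R lam mu \<and> (i, c + 1) \<in> skew_cells R lam mu \<longrightarrow>
        (if odd c then a i c \<le> a i (c + 1) else a i c \<ge> a i (c + 1)))}"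

definition cell_weight :: "int \<Rightarrow> int \<Rightarrow> monom" where
  "cell_weight c v = (if even c then ({#v#}, {#}) else ({#}, {#v#}))"

definition filling_weight :: "nat set \<Rightarrow> (nat \<Rightarrow> int) \<Rightarrow> (nat \<Rightarrow> int) \<Rightarrow> (nat \<Rightarrow> int \<Rightarrow> int) \<Rightarrow> monom" where
  "filling_weight R lam mu a = (\<Sum>(i, c) \<in> skew_cells R lam mu. cell_weight c (a i c))"

lemma finite_skew_cells: "finite R \<Longrightarrow> finite (skew_cells R lam mu)"
  by (rule finite_subset[of _ "\<Union>i \<in> R. {i} \<times> {mu i<..lam i}"]) (auto simp: skew_cells_def)

lemma mset_map_filter_upt:
  "mset (map f (filter P [0..<n])) = (\<Sum>p<n. if P p then {#f p#} else {#})"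
  by (induction n) auto

lemma seq_weight_entries: "fst (seq_weight s) + snd (seq_weight s) = mset s"
proof -
  have "mset (map f (filter P xs)) + mset (map f (filter (\<lambda>x. \<not> P x) xs)) = mset (map f xs)" for f P xs
    by (induction xs) auto
  from this[of "\<lambda>p. s ! p" odd "[0..<length s]"] show ?thesis
    by (simp add: seq_weight_def map_nth)
qed

lemma finite_fibres_alt_seqs: "finite_fibres (alt_seqs k n) seq_weight"
  unfolding finite_fibres_def
proof
  fix M :: monom
  let ?N = "fst M + snd M"
  have "{s \<in> alt_seqs k n. seq_weight s = M} \<subseteq> {xs. set xs \<subseteq> set_mset ?N \<and> length xs = size ?N}"
    using seq_weight_entries by (force simp flip: size_mset)
  moreover have "finite {xs. set xs \<subseteq> set_mset ?N \<and> length xs = size ?N}"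
    by (rule finite_lists_length_eq) simp
  ultimately show "finite {s \<in> alt_seqs k n. seq_weight s = M}"
    by (rule finite_subset)
qed

lemma seq_weight_eq_sum: "seq_weight s = (\<Sum>p<length s. cell_weight (int p + 1) (s ! p))"
proof -
  have "cell_weight (int p + 1) v = (if odd p then {#v#} else {#}, if even p then {#v#} else {#})"
    for p v by (simp add: cell_weight_def)
  then show ?thesis
    unfolding seq_weight_def by (simp only: mset_map_filter_upt sum_prod)
qed

text \<open>As \<open>mu r\<close> is even, the entry \<open>s ! p\<close> lands in a column of the parity of its position
  \<open>p + 1\<close> in the sequence, so alternating rows correspond to alternating sequences.\<close>

fun put_row :: "nat \<Rightarrow> int \<Rightarrow> int list \<times> (nat \<Rightarrow> int \<Rightarrow> int) \<Rightarrow> nat \<Rightarrow> int \<Rightarrow> int" where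
  "put_row r offset (s, b) = (\<lambda>i c. if i = r then
     (if offset < c \<and> c \<le> offset + int (length s) then s ! nat (c - offset - 1) else 0) else b i c)"

definition get_row :: "nat \<Rightarrow> int \<Rightarrow> int \<Rightarrow> (nat \<Rightarrow> int \<Rightarrow> int) \<Rightarrow> int list \<times> (nat \<Rightarrow> int \<Rightarrow> int)" where
  "get_row r offset len a = (map (\<lambda>p. a r (offset + 1 + int p)) [0..<nat len], a(r := (\<lambda>_. 0)))"

lemma put_row_in_row_fillings:
  assumes "r \<notin> R" and "even (mu r)" and s: "s \<in> alt_seqs k (lam r - mu r)"
    and b: "b \<in> row_fillings k R lam mu"
  shows "put_row r (mu r) (s, b) \<in> row_fillings k (insert r R) lam mu"
proof -
  have len: "int (length s) = lam r - mu r" and rng: "\<forall>x \<in> set s. in_range k x"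
    and alt: "\<And>p. Suc p < length s \<Longrightarrow> (if even p then s ! p \<le> s ! Suc p else s ! p \<ge> s ! Suc p)"
    using s unfolding alt_seqs_def by auto
  let ?a = "put_row r (mu r) (s, b)"
  have row_r: "?a r c = s ! nat (c - mu r - 1)" if "mu r < c" "c \<le> lam r" for c
    using that len by simp
  have other_rows: "?a i c = b i c" if "i \<noteq> r" for i c
    using that by simp
  have "in_range k (?a i c)" if "(i, c) \<in> skew_cells (insert r R) lam mu" for i c
  proof (cases "i = r")
    case True
    with that have "mu r < c" "c \<le> lam r" by (auto simp: skew_cells_def)
    moreover from this have "nat (c - mu r - 1) < length s" using len by auto
    ultimately show ?thesis using rng True row_r by auto
  next
    case False
    with that b show ?thesis by (auto simp: row_fillings_def skew_cells_def other_rows)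
  qed
  moreover have "if odd c then ?a i c \<le> ?a i (c + 1) else ?a i c \<ge> ?a i (c + 1)"
    if "(i, c) \<in> skew_cells (insert r R) lam mu" "(i, c + 1) \<in> skew_cells (insert r R) lam mu" for i c
  proof (cases "i = r")
    case True
    with that have c: "mu r < c" "c + 1 \<le> lam r" by (auto simp: skew_cells_def)
    define p where "p = nat (c - mu r - 1)"
    have "nat (c + 1 - mu r - 1) = Suc p" "Suc p < length s" using c len by (auto simp: p_def)
    moreover have "odd c \<longleftrightarrow> even p"
      using c \<open>even (mu r)\<close> by (simp add: p_def even_nat_iff)
    ultimately show ?thesis using alt[of p] True c row_r[of c] row_r[of "c + 1"]
      unfolding p_def by (auto split: if_splits)
  next
    case False
    with that b show ?thesis by (auto simp: row_fillings_def skew_cells_def other_rows)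
  qed
  moreover have "?a i c = 0" if "(i, c) \<notin> skew_cells (insert r R) lam mu" for i c
    using that b len by (auto simp: row_fillings_def skew_cells_def)
  moreover have "\<forall>i \<in> insert r R. mu i \<le> lam i"
    using b len by (auto simp: row_fillings_def)
  ultimately show ?thesis
    unfolding row_fillings_def by blast
qed

lemma get_row_in_row_fillings:
  assumes "r \<notin> R" and "even (mu r)" and a: "a \<in> row_fillings k (insert r R) lam mu"
  shows "get_row r (mu r) (lam r - mu r) a \<in> alt_seqs k (lam r - mu r) \<times> row_fillings k R lam mu"
proof -
  obtain s b where sb: "get_row r (mu r) (lam r - mu r) a = (s, b)" by fastforce
  have le: "mu r \<le> lam r" using a by (simp add: row_fillings_def)
  have len: "length s = nat (lam r - mu r)" using sb by (auto simp: get_row_def)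
  have s_nth: "s ! p = a r (mu r + 1 + int p)" if "p < nat (lam r - mu r)" for p
    using that sb by (auto simp: get_row_def)
  have cell: "(r, mu r + 1 + int p) \<in> skew_cells (insert r R) lam mu" if "p < nat (lam r - mu r)" for p
    using that by (auto simp: skew_cells_def)
  have "\<forall>x \<in> set s. in_range k x"
  proof
    fix x assume "x \<in> set s"
    then obtain p where "p < nat (lam r - mu r)" "x = s ! p" by (auto simp: in_set_conv_nth len)
    then show "in_range k x" using a cell[of p] s_nth[of p] by (auto simp: row_fillings_def)
  qed
  moreover have "if even p then s ! p \<le> s ! Suc p else s ! p \<ge> s ! Suc p" if "Suc p < length s" for p
  proof -
    have alt_a: "\<And>i c. (i, c) \<in> skew_cells (insert r R) lam mu \<Longrightarrow> (i, c + 1) \<in> skew_cells (insert r R) lam mu \<Longrightarrow>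
        if odd c then a i c \<le> a i (c + 1) else a i c \<ge> a i (c + 1)"
      using a unfolding row_fillings_def by blast
    have "if odd (mu r + 1 + int p) then a r (mu r + 1 + int p) \<le> a r (mu r + 1 + int p + 1)
        else a r (mu r + 1 + int p) \<ge> a r (mu r + 1 + int p + 1)"
    proof (rule alt_a)
      show "(r, mu r + 1 + int p) \<in> skew_cells (insert r R) lam mu"
        using cell[of p] that len by simp
      show "(r, mu r + 1 + int p + 1) \<in> skew_cells (insert r R) lam mu"
        using cell[of "Suc p"] that len by (simp add: add.assoc)
    qed
    moreover have "odd (mu r + 1 + int p) \<longleftrightarrow> even p" using \<open>even (mu r)\<close> by simp
    ultimately show ?thesis
      using s_nth[of p] s_nth[of "Suc p"] that len by (auto simp: add.assoc)
  qed
  ultimately have "s \<in> alt_seqs k (lam r - mu r)"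
    using len le by (auto simp: alt_seqs_def)
  moreover have "b \<in> row_fillings k R lam mu"
    using a sb \<open>r \<notin> R\<close> by (auto simp: get_row_def row_fillings_def skew_cells_def)
  ultimately show ?thesis using sb by simp
qed

lemma get_row_put_row:
  assumes "r \<notin> R" and s: "s \<in> alt_seqs k (lam r - mu r)" and b: "b \<in> row_fillings k R lam mu"
  shows "get_row r (mu r) (lam r - mu r) (put_row r (mu r) (s, b)) = (s, b)"
proof -
  have len: "int (length s) = lam r - mu r" using s by (simp add: alt_seqs_def)
  have "map (\<lambda>p. put_row r (mu r) (s, b) r (mu r + 1 + int p)) [0..<nat (lam r - mu r)] = s"
    using len by (intro nth_equalityI) auto
  moreover have "b r = (\<lambda>_. 0)"
    using assms b by (auto simp: row_fillings_def skew_cells_def)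
  ultimately show ?thesis
    by (auto simp: get_row_def fun_eq_iff)
qed

lemma put_row_get_row:
  assumes a: "a \<in> row_fillings k (insert r R) lam mu"
  shows "put_row r (mu r) (get_row r (mu r) (lam r - mu r) a) = a"
proof (intro ext)
  fix i c
  have le: "mu r \<le> lam r" using a by (simp add: row_fillings_def)
  show "put_row r (mu r) (get_row r (mu r) (lam r - mu r) a) i c = a i c"
  proof (cases "i = r \<and> mu r < c \<and> c \<le> lam r")
    case True
    then have "nat (c - mu r - 1) < nat (lam r - mu r)" "mu r + 1 + int (nat (c - mu r - 1)) = c"
      by auto
    then show ?thesis using True le by (simp add: get_row_def)
  next
    case False
    then show ?thesis
      using a le by (auto simp: get_row_def row_fillings_def skew_cells_def)
  qed
qed

lemma bij_betw_put_row:
  assumes "r \<notin> R" and "even (mu r)"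
  shows "bij_betw (put_row r (mu r)) (alt_seqs k (lam r - mu r) \<times> row_fillings k R lam mu)
    (row_fillings k (insert r R) lam mu)"
proof (rule bij_betw_byWitness[where f' = "get_row r (mu r) (lam r - mu r)"])
  show "\<forall>x \<in> alt_seqs k (lam r - mu r) \<times> row_fillings k R lam mu.
      get_row r (mu r) (lam r - mu r) (put_row r (mu r) x) = x"
    using get_row_put_row[OF \<open>r \<notin> R\<close>] by auto
  show "\<forall>a \<in> row_fillings k (insert r R) lam mu. put_row r (mu r) (get_row r (mu r) (lam r - mu r) a) = a"
    using put_row_get_row by blast
  show "put_row r (mu r) ` (alt_seqs k (lam r - mu r) \<times> row_fillings k R lam mu)
      \<subseteq> row_fillings k (insert r R) lam mu"
    using put_row_in_row_fillings[where mu = mu, OF assms] by auto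
  show "get_row r (mu r) (lam r - mu r) ` row_fillings k (insert r R) lam mu
      \<subseteq> alt_seqs k (lam r - mu r) \<times> row_fillings k R lam mu"
    by (intro image_subsetI get_row_in_row_fillings[where mu = mu, OF assms])
qed

lemma cell_weight_shift: "even d \<Longrightarrow> cell_weight (d + c) = cell_weight c"
  by (simp add: cell_weight_def fun_eq_iff)

lemma filling_weight_put_row:
  assumes "r \<notin> R" and "finite R" and "even (mu r)" and len: "int (length s) = lam r - mu r"
  shows "filling_weight (insert r R) lam mu (put_row r (mu r) (s, b)) = seq_weight s + filling_weight R lam mu b"
proof -
  let ?a = "put_row r (mu r) (s, b)"
  have row_cells: "{mu r<..lam r} = (\<lambda>p. mu r + 1 + int p) ` {..<length s}"
  proof (intro equalityI subsetI)
    fix c assume "c \<in> {mu r<..lam r}"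
    then show "c \<in> (\<lambda>p. mu r + 1 + int p) ` {..<length s}"
      using len by (intro image_eqI[where x = "nat (c - mu r - 1)"]) auto
  qed (use len in auto)
  let ?f = "\<lambda>(i, c). cell_weight c (?a i c)"
  have cells: "skew_cells (insert r R) lam mu = Pair r ` {mu r<..lam r} \<union> skew_cells R lam mu"
    by (auto simp: skew_cells_def)
  have "filling_weight (insert r R) lam mu ?a = sum ?f (Pair r ` {mu r<..lam r}) + sum ?f (skew_cells R lam mu)"
    unfolding filling_weight_def cells using \<open>r \<notin> R\<close> \<open>finite R\<close>
    by (intro sum.union_disjoint finite_skew_cells) (auto simp: skew_cells_def)
  also have "sum ?f (Pair r ` {mu r<..lam r}) = (\<Sum>c \<in> {mu r<..lam r}. cell_weight c (?a r c))"
    by (subst sum.reindex) (auto simp: inj_on_def)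
  also have "(\<Sum>c \<in> {mu r<..lam r}. cell_weight c (?a r c)) = (\<Sum>p<length s. cell_weight (int p + 1) (s ! p))"
    unfolding row_cells using \<open>even (mu r)\<close>
    by (subst sum.reindex) (auto simp: inj_on_def add.assoc add.commute[of 1] cell_weight_shift)
  also have "sum ?f (skew_cells R lam mu) = filling_weight R lam mu b"
    unfolding filling_weight_def using \<open>r \<notin> R\<close>
    by (intro sum.cong) (auto simp: skew_cells_def)
  finally show ?thesis by (simp add: seq_weight_eq_sum)
qed

lemma row_fillings_empty: "row_fillings k {} lam mu = {\<lambda>_ _. 0}"
  by (auto simp: row_fillings_def skew_cells_def)

lemma gf_prod_list_gf_alt:
  assumes "distinct rs" and "\<forall>r \<in> set rs. even (mu r)"
  shows "gf_prod_list (map (\<lambda>r. gf_alt k (lam r - mu r)) rs)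
      = counting_gf (row_fillings k (set rs) lam mu) (filling_weight (set rs) lam mu)
    \<and> finite_fibres (row_fillings k (set rs) lam mu) (filling_weight (set rs) lam mu)"
  using assms
proof (induction rs)
  case Nil
  have "filling_weight {} lam mu (\<lambda>_ _. 0) = 0"
    by (simp add: filling_weight_def skew_cells_def)
  then show ?case
    by (auto simp: gf_prod_list_def gf_one_def row_fillings_empty counting_gf_singleton
        finite_fibres_def zero_prod_def)
next
  case (Cons r rs)
  let ?A = "alt_seqs k (lam r - mu r)" and ?B = "row_fillings k (set rs) lam mu"
  let ?w = "\<lambda>(s, b). seq_weight s + filling_weight (set rs) lam mu b"
  have r: "r \<notin> set rs" "even (mu r)" using Cons.prems by auto
  note fibres_A = finite_fibres_alt_seqs[of k "lam r - mu r"]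
  have IH: "gf_prod_list (map (\<lambda>r. gf_alt k (lam r - mu r)) rs) = counting_gf ?B (filling_weight (set rs) lam mu)"
    "finite_fibres ?B (filling_weight (set rs) lam mu)"
    using Cons by auto
  have bij: "bij_betw (put_row r (mu r)) (?A \<times> ?B) (row_fillings k (set (r # rs)) lam mu)"
    using bij_betw_put_row[where mu = mu, OF r] by simp
  have weight: "filling_weight (set (r # rs)) lam mu (put_row r (mu r) x) = ?w x" if mem: "x \<in> ?A \<times> ?B" for x
  proof -
    obtain s b where x: "x = (s, b)" "s \<in> ?A" using mem by auto
    then have "int (length s) = lam r - mu r" by (simp add: alt_seqs_def)
    from filling_weight_put_row[where mu = mu and b = b and lam = lam, OF r(1) finite_set r(2) this]
    show ?thesis using x by simp
  qed
  have "gf_prod_list (map (\<lambda>r. gf_alt k (lam r - mu r)) (r # rs))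
      = gf_mult (gf_alt k (lam r - mu r)) (gf_prod_list (map (\<lambda>r. gf_alt k (lam r - mu r)) rs))"
    by (simp add: gf_prod_list_def)
  also have "\<dots> = counting_gf (?A \<times> ?B) ?w"
    unfolding IH(1) by (subst gf_alt_eq_counting_gf) (rule gf_mult_counting_gf(1)[OF fibres_A IH(2)])
  finally show ?case
    using counting_gf_bij_betw[OF bij, where wB = "filling_weight (set (r # rs)) lam mu" and wA = ?w, OF weight]
      gf_mult_counting_gf(2)[OF fibres_A IH(2)] by simp
qed

definition odd_col :: "int \<Rightarrow> int" where "odd_col x = (if odd x then x else x + 1)"
definition even_col :: "int \<Rightarrow> int" where "even_col x = (if odd x then x + 1 else x)"

text \<open>Rows \<open>j\<close> and \<open>j + 1\<close> cross at the column pair \<open>{x, x + 1}\<close> if one of the two rows ends or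
  starts there, or if the tableau inequality between the odd column of row \<open>j\<close> and the even column
  of row \<open>j + 1\<close> fails. Exactly at such places the tails of the two rows after column \<open>x\<close> can be
  exchanged without breaking the alternation of either row.\<close>

definition crosses :: "(nat \<Rightarrow> int) \<Rightarrow> (nat \<Rightarrow> int) \<Rightarrow> (nat \<Rightarrow> int \<Rightarrow> int) \<Rightarrow> nat \<Rightarrow> int \<Rightarrow> bool" where
  "crosses mu e a j x \<longleftrightarrow>
     mu j \<le> odd_col x \<and> odd_col x \<le> e j + 1 \<and> mu (Suc j) \<le> even_col x \<and> even_col x \<le> e (Suc j) + 1 \<and>
     (odd_col x = e j + 1 \<or> even_col x = mu (Suc j) \<or> even_col x = e (Suc j) + 1 \<or>
      a j (odd_col x) \<le> a (Suc j) (even_col x))"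

definition crossings :: "nat \<Rightarrow> (nat \<Rightarrow> int) \<Rightarrow> (nat \<Rightarrow> int) \<Rightarrow> (nat \<Rightarrow> int \<Rightarrow> int) \<Rightarrow> (nat \<times> int) set" where
  "crossings m mu e a = {(j, x). 1 \<le> j \<and> j < m \<and> crosses mu e a j x}"

definition crossing_col :: "nat \<Rightarrow> (nat \<Rightarrow> int) \<Rightarrow> (nat \<Rightarrow> int) \<Rightarrow> (nat \<Rightarrow> int \<Rightarrow> int) \<Rightarrow> int" where
  "crossing_col m mu e a = Min (snd ` crossings m mu e a)"

text \<open>Among the crossings in the leftmost column the lowest row is chosen if the column is odd and
  the highest if it is even; this is the choice that survives the exchange of tails.\<close>

definition crossing_row :: "nat \<Rightarrow> (nat \<Rightarrow> int) \<Rightarrow> (nat \<Rightarrow> int) \<Rightarrow> (nat \<Rightarrow> int \<Rightarrow> int) \<Rightarrow> nat" where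
  "crossing_row m mu e a = (let J = {j. (j, crossing_col m mu e a) \<in> crossings m mu e a} in
     if odd (crossing_col m mu e a) then Max J else Min J)"

definition swap_tails :: "(nat \<Rightarrow> int \<Rightarrow> int) \<Rightarrow> nat \<Rightarrow> int \<Rightarrow> (nat \<Rightarrow> int \<Rightarrow> int)" where
  "swap_tails a i x = (\<lambda>j c. if j = i \<and> x < c then a (Suc i) c else if j = Suc i \<and> x < c then a i c else a j c)"

lemma swap_tails_swap_tails: "swap_tails (swap_tails a i x) i x = a"
  unfolding swap_tails_def by (auto simp: fun_eq_iff)

lemma finite_crossings: "finite (crossings m mu e a)"
proof -
  have "crossings m mu e a \<subseteq> (\<Union>j\<in>{..<m}. {j} \<times> {mu j - 1 .. e j + 1})"
    unfolding crossings_def crosses_def odd_col_def by (auto split: if_splits)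
  moreover have "finite (\<Union>j\<in>{..<m}. {j} \<times> {mu j - 1 .. e j + 1})" by auto
  ultimately show ?thesis by (rule finite_subset)
qed

lemma crosses_cong:
  assumes "odd_col x \<le> e' j + 1 \<longleftrightarrow> odd_col x \<le> e j + 1" "odd_col x = e' j + 1 \<longleftrightarrow> odd_col x = e j + 1"
    and "even_col x \<le> e' (Suc j) + 1 \<longleftrightarrow> even_col x \<le> e (Suc j) + 1" "even_col x = e' (Suc j) + 1 \<longleftrightarrow> even_col x = e (Suc j) + 1"
    and "a' j (odd_col x) = a j (odd_col x)" "a' (Suc j) (even_col x) = a (Suc j) (even_col x)"
  shows "crosses mu e' a' j x \<longleftrightarrow> crosses mu e a j x"
  using assms unfolding crosses_def by simp

locale row_filling =
  fixes k :: enat and m :: nat and mu e :: "nat \<Rightarrow> int" and a :: "nat \<Rightarrow> int \<Rightarrow> int"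
  assumes mu_even: "\<And>j. 1 \<le> j \<Longrightarrow> j \<le> m \<Longrightarrow> even (mu j)"
    and mu_dec: "\<And>j. 1 \<le> j \<Longrightarrow> j < m \<Longrightarrow> mu (Suc j) < mu j"
    and ends_parity: \<comment> \<open>what remains of hypotheses (a) and (b) when \<open>\<lambda>\<close> is permuted\<close>
      "(\<forall>j\<in>{1..m}. odd (e j) \<and> (\<forall>i\<in>{1..m}. mu i \<le> e j)) \<or> (\<forall>j\<in>{1..m}. even (e j))"
    and filling: "a \<in> row_fillings k {1..m} e mu"
begin

lemma mu_le_e: "1 \<le> j \<Longrightarrow> j \<le> m \<Longrightarrow> mu j \<le> e j"
  using filling unfolding row_fillings_def by auto

lemma a_zero: "\<not> (1 \<le> j \<and> j \<le> m \<and> mu j < c \<and> c \<le> e j) \<Longrightarrow> a j c = 0"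
  using filling unfolding row_fillings_def skew_cells_def by auto

lemma a_in_range: "1 \<le> j \<Longrightarrow> j \<le> m \<Longrightarrow> mu j < c \<Longrightarrow> c \<le> e j \<Longrightarrow> in_range k (a j c)"
  using filling unfolding row_fillings_def skew_cells_def by auto

lemma alt_odd: "1 \<le> j \<Longrightarrow> j \<le> m \<Longrightarrow> mu j < c \<Longrightarrow> c + 1 \<le> e j \<Longrightarrow> odd c \<Longrightarrow> a j c \<le> a j (c + 1)"
  using filling unfolding row_fillings_def skew_cells_def by fastforce

lemma alt_even: "1 \<le> j \<Longrightarrow> j \<le> m \<Longrightarrow> mu j < c \<Longrightarrow> c + 1 \<le> e j \<Longrightarrow> even c \<Longrightarrow> a j (c + 1) \<le> a j c"
  using filling unfolding row_fillings_def skew_cells_def by fastforce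

end

locale crossing_filling = row_filling +
  assumes has_crossing: "crossings m mu e a \<noteq> {}"
begin

abbreviation "x0 \<equiv> crossing_col m mu e a"
abbreviation "i0 \<equiv> crossing_row m mu e a"

lemma crossing_col_mem: "x0 \<in> snd ` crossings m mu e a"
  unfolding crossing_col_def using finite_crossings has_crossing by (intro Min_in) auto

lemma no_crossing_left: "1 \<le> j \<Longrightarrow> j < m \<Longrightarrow> y < x0 \<Longrightarrow> \<not> crosses mu e a j y"
proof
  assume "1 \<le> j" "j < m" "y < x0" "crosses mu e a j y"
  then have "y \<in> snd ` crossings m mu e a" unfolding crossings_def by force
  then have "x0 \<le> y" unfolding crossing_col_def using finite_crossings by (intro Min_le) auto
  then show False using \<open>y < x0\<close> by simp
qed

lemma crossing_row_extremal: "(i0, x0) \<in> crossings m mu e a"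
  "odd x0 \<Longrightarrow> (j, x0) \<in> crossings m mu e a \<Longrightarrow> j \<le> i0"
  "even x0 \<Longrightarrow> (j, x0) \<in> crossings m mu e a \<Longrightarrow> i0 \<le> j"
proof -
  let ?J = "{j. (j, x0) \<in> crossings m mu e a}"
  have fin: "finite ?J" by (rule finite_subset[of _ "{..<m}"]) (auto simp: crossings_def)
  have nej: "?J \<noteq> {}" using crossing_col_mem by force
  show "(i0, x0) \<in> crossings m mu e a"
    unfolding crossing_row_def Let_def using Max_in[OF fin nej] Min_in[OF fin nej] by auto
  show "odd x0 \<Longrightarrow> (j, x0) \<in> crossings m mu e a \<Longrightarrow> j \<le> i0" unfolding crossing_row_def Let_def using fin by auto
  show "even x0 \<Longrightarrow> (j, x0) \<in> crossings m mu e a \<Longrightarrow> i0 \<le> j" unfolding crossing_row_def Let_def using fin by auto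
qed

lemma i0_range: "1 \<le> i0" "i0 < m" and crosses_at: "crosses mu e a i0 x0"
  using crossing_row_extremal(1) unfolding crossings_def by auto

lemma mu_le_x0: "mu i0 \<le> x0"
proof -
  have "mu i0 \<le> odd_col x0" using crosses_at unfolding crosses_def by auto
  moreover have "even (mu i0)" using mu_even i0_range by auto
  ultimately show ?thesis unfolding odd_col_def by (auto split: if_splits) presburger
qed

lemma mu_Suc: "mu (Suc i0) < mu i0" using mu_dec i0_range by auto
lemma mu_i0_even: "even (mu i0)" using mu_even i0_range by auto
lemma e_i0: "mu i0 \<le> e i0" using mu_le_e i0_range by auto

lemma x0_le_eS: "x0 \<le> e (Suc i0)"
proof (rule ccontr)
  assume "\<not> x0 \<le> e (Suc i0)"
  have v: "mu i0 \<le> odd_col x0" "odd_col x0 \<le> e i0 + 1" "mu (Suc i0) \<le> even_col x0" "even_col x0 \<le> e (Suc i0) + 1"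
    using crosses_at unfolding crosses_def by auto
  have "even_col x0 \<ge> x0" unfolding even_col_def by auto
  then have ecq: "even_col x0 = e (Suc i0) + 1" and ex: "even x0"
    using v(4) \<open>\<not> x0 \<le> e (Suc i0)\<close> unfolding even_col_def by (auto split: if_splits)
  then have x0e: "x0 = e (Suc i0) + 1" unfolding even_col_def by auto
  then have "odd (e (Suc i0))" using ex by auto
  then have "\<forall>j\<in>{1..m}. odd (e j) \<and> (\<forall>i\<in>{1..m}. mu i \<le> e j)" using ends_parity i0_range by auto
  then have "mu i0 \<le> e (Suc i0)" using i0_range by auto
  have "crosses mu e a i0 (x0 - 1)"
    unfolding crosses_def odd_col_def even_col_def using ex x0e v \<open>mu i0 \<le> e (Suc i0)\<close>
    by (auto simp: odd_col_def even_col_def split: if_splits)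
  then show False using no_crossing_left i0_range by auto
qed

lemma x0_le_e: "x0 \<le> e i0"
proof (rule ccontr)
  assume "\<not> x0 \<le> e i0"
  have v: "mu i0 \<le> odd_col x0" "odd_col x0 \<le> e i0 + 1" "mu (Suc i0) \<le> even_col x0" "even_col x0 \<le> e (Suc i0) + 1"
    using crosses_at unfolding crosses_def by auto
  have "odd_col x0 \<ge> x0" unfolding odd_col_def by auto
  then have ocq: "odd_col x0 = e i0 + 1" and ox: "odd x0"
    using v(2) \<open>\<not> x0 \<le> e i0\<close> unfolding odd_col_def by (auto split: if_splits)
  then have x0e: "x0 = e i0 + 1" unfolding odd_col_def by auto
  have "crosses mu e a i0 (x0 - 1)"
    unfolding crosses_def using ox x0e v e_i0 mu_Suc by (auto simp: odd_col_def even_col_def split: if_splits)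
  then show False using no_crossing_left i0_range by auto
qed

lemma no_crossing_before: "\<not> crosses mu e a i0 (x0 - 1)" using no_crossing_left i0_range by auto

lemma join_upper_odd: "odd x0 \<Longrightarrow> mu i0 < x0 \<Longrightarrow> x0 + 1 \<le> e (Suc i0) \<Longrightarrow> a i0 x0 \<le> a (Suc i0) (x0 + 1)"
  using crosses_at x0_le_e mu_Suc mu_le_x0 unfolding crosses_def odd_col_def even_col_def by auto

lemma join_upper_even: "even x0 \<Longrightarrow> mu i0 < x0 \<Longrightarrow> x0 + 1 \<le> e (Suc i0) \<Longrightarrow> a (Suc i0) (x0 + 1) \<le> a i0 x0"
proof -
  assume h: "even x0" "mu i0 < x0" "x0 + 1 \<le> e (Suc i0)"
  have "\<not> (x0 - 1 = e i0 + 1 \<or> x0 = mu (Suc i0) \<or> x0 = e (Suc i0) + 1 \<or> a i0 (x0 - 1) \<le> a (Suc i0) x0)"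
    using no_crossing_before h x0_le_e mu_Suc unfolding crosses_def odd_col_def even_col_def by auto
  then have 1: "a (Suc i0) x0 < a i0 (x0 - 1)" by auto
  have "mu i0 < x0 - 1" using h mu_i0_even by presburger
  then have 2: "a i0 (x0 - 1) \<le> a i0 x0" using alt_odd[of i0 "x0 - 1"] i0_range x0_le_e h by auto
  have 3: "a (Suc i0) (x0 + 1) \<le> a (Suc i0) x0" using alt_even[of "Suc i0" x0] i0_range h mu_Suc by auto
  show ?thesis using 1 2 3 by simp
qed

lemma join_lower_odd: "odd x0 \<Longrightarrow> mu (Suc i0) < x0 \<Longrightarrow> x0 \<le> e (Suc i0) \<Longrightarrow> x0 + 1 \<le> e i0 \<Longrightarrow> a (Suc i0) x0 \<le> a i0 (x0 + 1)"
proof -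
  assume h: "odd x0" "mu (Suc i0) < x0" "x0 \<le> e (Suc i0)" "x0 + 1 \<le> e i0"
  have "\<not> (x0 = e i0 + 1 \<or> x0 - 1 = mu (Suc i0) \<or> x0 - 1 = e (Suc i0) + 1 \<or> a i0 x0 \<le> a (Suc i0) (x0 - 1))"
    using no_crossing_before h mu_le_x0 unfolding crosses_def odd_col_def even_col_def by auto
  then have 1: "a (Suc i0) (x0 - 1) < a i0 x0" and ne1: "x0 - 1 \<noteq> mu (Suc i0)" by auto
  have 2: "a (Suc i0) x0 \<le> a (Suc i0) (x0 - 1)"
    using alt_even[of "Suc i0" "x0 - 1"] i0_range h ne1 by auto
  have "mu i0 < x0" using mu_le_x0 mu_i0_even h by presburger
  then have 3: "a i0 x0 \<le> a i0 (x0 + 1)" using alt_odd[of i0 x0] i0_range h by auto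
  show ?thesis using 1 2 3 by simp
qed

lemma join_lower_even: "even x0 \<Longrightarrow> mu (Suc i0) < x0 \<Longrightarrow> x0 + 1 \<le> e i0 \<Longrightarrow> a i0 (x0 + 1) \<le> a (Suc i0) x0"
  using crosses_at x0_le_eS unfolding crosses_def odd_col_def even_col_def by auto


abbreviation "tr \<equiv> Transposition.transpose i0 (Suc i0)"
abbreviation "e' \<equiv> e \<circ> tr"
abbreviation "a' \<equiv> swap_tails a i0 x0"

lemma a'_simps: "c \<le> x0 \<Longrightarrow> a' j c = a j c"
  "x0 < c \<Longrightarrow> a' i0 c = a (Suc i0) c" "x0 < c \<Longrightarrow> a' (Suc i0) c = a i0 c"
  "j \<noteq> i0 \<Longrightarrow> j \<noteq> Suc i0 \<Longrightarrow> a' j c = a j c"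
  unfolding swap_tails_def by auto

lemma swap_tails_zero: "\<not> (1 \<le> j \<and> j \<le> m \<and> mu j < c \<and> c \<le> e' j) \<Longrightarrow> a' j c = 0"
proof -
  assume h: "\<not> (1 \<le> j \<and> j \<le> m \<and> mu j < c \<and> c \<le> e' j)"
  have r: "1 \<le> i0" "Suc i0 \<le> m" using i0_range by auto
  consider "j = i0" | "j = Suc i0" | "j \<noteq> i0" "j \<noteq> Suc i0" by blast
  then show ?thesis
  proof cases
    case 1
    then show ?thesis
    proof (cases "x0 < c")
      case True
      then show ?thesis using h 1 r mu_le_x0 mu_Suc by (auto simp: a'_simps intro!: a_zero)
    next
      case False
      then show ?thesis using h 1 r x0_le_eS by (auto simp: a'_simps intro!: a_zero)
    qed
  next
    case 2
    then show ?thesis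
    proof (cases "x0 < c")
      case True
      then show ?thesis using h 2 r mu_le_x0 mu_Suc by (auto simp: a'_simps intro!: a_zero)
    next
      case False
      then show ?thesis using h 2 r x0_le_e by (auto simp: a'_simps intro!: a_zero)
    qed
  next
    case 3
    then show ?thesis using h by (auto simp: a'_simps intro!: a_zero)
  qed
qed

lemma swap_tails_in_range: "1 \<le> j \<Longrightarrow> j \<le> m \<Longrightarrow> mu j < c \<Longrightarrow> c \<le> e' j \<Longrightarrow> in_range k (a' j c)"
proof -
  assume h: "1 \<le> j" "j \<le> m" "mu j < c" "c \<le> e' j"
  have r: "1 \<le> i0" "Suc i0 \<le> m" using i0_range by auto
  consider "j = i0" | "j = Suc i0" | "j \<noteq> i0" "j \<noteq> Suc i0" by blast
  then show ?thesis
  proof cases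
    case 1
    then show ?thesis
    proof (cases "x0 < c")
      case True
      then show ?thesis using h 1 r mu_le_x0 mu_Suc by (auto simp: a'_simps intro!: a_in_range)
    next
      case False
      then show ?thesis using h 1 r x0_le_e by (auto simp: a'_simps intro!: a_in_range)
    qed
  next
    case 2
    then show ?thesis
    proof (cases "x0 < c")
      case True
      then show ?thesis using h 2 r mu_le_x0 mu_Suc by (auto simp: a'_simps intro!: a_in_range)
    next
      case False
      then show ?thesis using h 2 r x0_le_eS by (auto simp: a'_simps intro!: a_in_range)
    qed
  next
    case 3
    then show ?thesis using h by (auto simp: a'_simps intro!: a_in_range)
  qed
qed

lemma swap_tails_alternating: "1 \<le> j \<Longrightarrow> j \<le> m \<Longrightarrow> mu j < c \<Longrightarrow> c + 1 \<le> e' j \<Longrightarrow>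
   (if odd c then a' j c \<le> a' j (c + 1) else a' j c \<ge> a' j (c + 1))"
proof -
  assume h: "1 \<le> j" "j \<le> m" "mu j < c" "c + 1 \<le> e' j"
  have r: "1 \<le> i0" "Suc i0 \<le> m" using i0_range by auto
  have old: "1 \<le> j' \<Longrightarrow> j' \<le> m \<Longrightarrow> mu j' < c \<Longrightarrow> c + 1 \<le> e j' \<Longrightarrow>
     (if odd c then a j' c \<le> a j' (c + 1) else a j' c \<ge> a j' (c + 1))" for j'
    using alt_odd alt_even by auto
  consider "j = i0" | "j = Suc i0" | "j \<noteq> i0" "j \<noteq> Suc i0" by blast
  then show ?thesis
  proof cases
    case 1
    consider "c + 1 \<le> x0" | "x0 < c" | "c = x0" by linarith
    then show ?thesis
    proof cases
      case 1
      then show ?thesis using h \<open>j = i0\<close> r x0_le_e old[of i0] by (auto simp: a'_simps)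
    next
      case 2
      then show ?thesis using h \<open>j = i0\<close> r mu_le_x0 mu_Suc old[of "Suc i0"] by (auto simp: a'_simps)
    next
      case 3
      then show ?thesis using h \<open>j = i0\<close> join_upper_odd join_upper_even by (auto simp: a'_simps)
    qed
  next
    case 2
    consider "c + 1 \<le> x0" | "x0 < c" | "c = x0" by linarith
    then show ?thesis
    proof cases
      case 1
      then show ?thesis using h \<open>j = Suc i0\<close> r x0_le_eS old[of "Suc i0"] by (auto simp: a'_simps)
    next
      case 2
      then show ?thesis using h \<open>j = Suc i0\<close> r mu_le_x0 mu_Suc old[of i0] by (auto simp: a'_simps)
    next
      case 3
      then show ?thesis using h \<open>j = Suc i0\<close> join_lower_odd join_lower_even x0_le_eS by (auto simp: a'_simps)
    qed
  next
    case 3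
    then show ?thesis using h old[of j] by (auto simp: a'_simps)
  qed
qed

lemma swap_tails_row_length: "1 \<le> j \<Longrightarrow> j \<le> m \<Longrightarrow> mu j \<le> e' j"
proof -
  assume h: "1 \<le> j" "j \<le> m"
  consider "j = i0" | "j = Suc i0" | "j \<noteq> i0" "j \<noteq> Suc i0" by blast
  then show ?thesis
    using h mu_le_e mu_le_x0 x0_le_eS e_i0 mu_Suc by cases (auto)
qed

lemma swap_tails_in_row_fillings: "a' \<in> row_fillings k {1..m} e' mu"
  unfolding row_fillings_def skew_cells_def
  using swap_tails_zero swap_tails_in_range swap_tails_alternating swap_tails_row_length by auto

lemma filling_weight_swap_tails: "filling_weight {1..m} e' mu a' = filling_weight {1..m} e mu a"
proof -
  let ?h = "\<lambda>(j, c). if x0 < c then (tr j, c) else (j, c)"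
  let ?S = "skew_cells {1..m} e' mu" and ?T = "skew_cells {1..m} e mu"
  have r: "1 \<le> i0" "Suc i0 \<le> m" using i0_range by auto
  have hh: "?h (?h z) = z" for z by (cases z) auto
  have ST: "?h z \<in> ?T" if "z \<in> ?S" for z
  proof -
    obtain j c where z: "z = (j, c)" by (cases z)
    have h: "1 \<le> j" "j \<le> m" "mu j < c" "c \<le> e' j" using that z unfolding skew_cells_def by auto
    consider "j = i0" | "j = Suc i0" | "j \<noteq> i0" "j \<noteq> Suc i0" by blast
    then show ?thesis
      using h r mu_le_x0 mu_Suc x0_le_e x0_le_eS unfolding z skew_cells_def by cases auto
  qed
  have TS: "?h z \<in> ?S" if "z \<in> ?T" for z
  proof -
    obtain j c where z: "z = (j, c)" by (cases z)
    have h: "1 \<le> j" "j \<le> m" "mu j < c" "c \<le> e j" using that z unfolding skew_cells_def by auto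
    consider "j = i0" | "j = Suc i0" | "j \<noteq> i0" "j \<noteq> Suc i0" by blast
    then show ?thesis
      using h r mu_le_x0 mu_Suc x0_le_e x0_le_eS unfolding z skew_cells_def by cases auto
  qed
  have val: "(case ?h z of (i, c) \<Rightarrow> cell_weight c (a i c)) = (case z of (i, c) \<Rightarrow> cell_weight c (a' i c))" for z
  proof -
    obtain j c where z: "z = (j, c)" by (cases z)
    consider "j = i0" | "j = Suc i0" | "j \<noteq> i0" "j \<noteq> Suc i0" by blast
    then show ?thesis unfolding z by cases (auto simp: a'_simps)
  qed
  show ?thesis unfolding filling_weight_def
    by (rule sum.reindex_bij_witness[where i = ?h and j = ?h]) (use hh ST TS val in auto)
qed

lemma swap_tails_local: "r \<notin> {i0, Suc i0} \<or> col \<le> x0 \<Longrightarrow>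
   (col \<le> e' r + 1 \<longleftrightarrow> col \<le> e r + 1) \<and> (col = e' r + 1 \<longleftrightarrow> col = e r + 1) \<and> a' r col = a r col"
proof -
  assume h: "r \<notin> {i0, Suc i0} \<or> col \<le> x0"
  consider "r = i0" | "r = Suc i0" | "r \<noteq> i0" "r \<noteq> Suc i0" by blast
  then show ?thesis using h x0_le_e x0_le_eS by cases (auto simp: a'_simps)
qed

lemma crosses_swap_tails_iff:
  assumes "j \<notin> {i0, Suc i0} \<or> odd_col y \<le> x0" and "Suc j \<notin> {i0, Suc i0} \<or> even_col y \<le> x0"
  shows "crosses mu e' a' j y \<longleftrightarrow> crosses mu e a j y"
  using swap_tails_local[OF assms(1)] swap_tails_local[OF assms(2)] by (intro crosses_cong) auto

lemma crosses_swap_tails: "crosses mu e' a' i0 x0"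
proof (cases "odd x0")
  case True
  show ?thesis
  proof (cases "x0 = e i0")
    case True
    then show ?thesis using \<open>odd x0\<close> mu_le_x0 x0_le_eS mu_Suc unfolding crosses_def odd_col_def even_col_def by auto
  next
    case False
    have "mu i0 < x0" using mu_le_x0 mu_i0_even \<open>odd x0\<close> by presburger
    then have "a i0 x0 \<le> a i0 (x0 + 1)" using alt_odd[of i0 x0] i0_range False x0_le_e \<open>odd x0\<close> by auto
    then show ?thesis using \<open>odd x0\<close> mu_le_x0 x0_le_eS x0_le_e mu_Suc unfolding crosses_def odd_col_def even_col_def
      by (auto simp: a'_simps)
  qed
next
  case False
  show ?thesis
  proof (cases "x0 = e (Suc i0)")
    case True
    then show ?thesis using \<open>\<not> odd x0\<close> mu_le_x0 x0_le_e mu_Suc unfolding crosses_def odd_col_def even_col_def by auto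
  next
    case not_end: False
    have "a (Suc i0) (x0 + 1) \<le> a (Suc i0) x0"
      using alt_even[of "Suc i0" x0] i0_range not_end x0_le_eS False mu_le_x0 mu_Suc by auto
    then show ?thesis using False mu_le_x0 x0_le_eS x0_le_e mu_Suc unfolding crosses_def odd_col_def even_col_def
      by (auto simp: a'_simps)
  qed
qed

lemma crossing_col_swap_tails: "crossings m mu e' a' \<noteq> {}" "crossing_col m mu e' a' = x0"
proof -
  have crossing: "(i0, x0) \<in> crossings m mu e' a'"
    using crosses_swap_tails i0_range unfolding crossings_def by auto
  then show "crossings m mu e' a' \<noteq> {}" by auto
  have no_crossing_left': "\<not> crosses mu e' a' j y" if "1 \<le> j" "j < m" "y < x0" for j y
  proof -
    have "odd_col y \<le> x0" "even_col y \<le> x0" using that unfolding odd_col_def even_col_def by auto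
    then have "crosses mu e' a' j y \<longleftrightarrow> crosses mu e a j y" by (intro crosses_swap_tails_iff) auto
    then show ?thesis using no_crossing_left that by auto
  qed
  show "crossing_col m mu e' a' = x0"
    unfolding crossing_col_def[of m mu e' a']
  proof (rule Min_eqI)
    show "finite (snd ` crossings m mu e' a')" using finite_crossings by simp
    show "x0 \<in> snd ` crossings m mu e' a'" using crossing by force
    fix y assume "y \<in> snd ` crossings m mu e' a'"
    then obtain j where "(j, y) \<in> crossings m mu e' a'" by auto
    then show "x0 \<le> y" using no_crossing_left' unfolding crossings_def by force
  qed
qed

lemma crossing_row_swap_tails: "crossing_row m mu e' a' = i0"
proof -
  let ?J = "{j. (j, x0) \<in> crossings m mu e' a'}"
  have finJ: "finite ?J" by (rule finite_subset[of _ "{..<m}"]) (auto simp: crossings_def)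
  have i0J: "i0 \<in> ?J" using crosses_swap_tails i0_range unfolding crossings_def by auto
  have unchanged: "(j, x0) \<in> crossings m mu e a" if "j \<in> ?J" "j \<notin> {i0, Suc i0} \<or> odd_col x0 \<le> x0"
    "Suc j \<notin> {i0, Suc i0} \<or> even_col x0 \<le> x0" for j
    using that crosses_swap_tails_iff[of j x0] unfolding crossings_def by auto
  show ?thesis
  proof (cases "odd x0")
    case True
    have "Max ?J = i0"
    proof (rule Max_eqI[OF finJ _ i0J], rule ccontr)
      fix j assume "j \<in> ?J" "\<not> j \<le> i0"
      then show False
        using unchanged[of j] crossing_row_extremal(2)[OF True] True by (auto simp: odd_col_def)
    qed
    then show ?thesis unfolding crossing_row_def[of m mu e' a'] Let_def crossing_col_swap_tails(2) using True by simp
  next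
    case False
    have "Min ?J = i0"
    proof (rule Min_eqI[OF finJ _ i0J], rule ccontr)
      fix j assume "j \<in> ?J" "\<not> i0 \<le> j"
      then show False
        using unchanged[of j] crossing_row_extremal(3)[of j] False by (auto simp: even_col_def)
    qed
    then show ?thesis unfolding crossing_row_def[of m mu e' a'] Let_def crossing_col_swap_tails(2) using False by simp
  qed
qed

end

lemma sum_eq_sum_fixpoints_involution:
  fixes f :: "'a \<Rightarrow> int"
  assumes fin: "finite X" and cl: "\<And>x. x \<in> X \<Longrightarrow> \<phi> x \<in> X" and inv: "\<And>x. x \<in> X \<Longrightarrow> \<phi> (\<phi> x) = x"
    and neg: "\<And>x. x \<in> X \<Longrightarrow> \<phi> x \<noteq> x \<Longrightarrow> f (\<phi> x) = - f x"
  shows "(\<Sum>x\<in>X. f x) = (\<Sum>x\<in>{x\<in>X. \<phi> x = x}. f x)"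
proof -
  let ?Y = "{x\<in>X. \<phi> x \<noteq> x}"
  have "(\<Sum>x\<in>?Y. f x) = (\<Sum>x\<in>?Y. f (\<phi> x))"
    by (rule sum.reindex_bij_witness[where i = \<phi> and j = \<phi>]) (use cl inv in auto)
  also have "\<dots> = (\<Sum>x\<in>?Y. - f x)" by (rule sum.cong) (use neg in auto)
  finally have "(\<Sum>x\<in>?Y. f x) = 0" by (simp add: sum_negf)
  moreover have "(\<Sum>x\<in>X. f x) = (\<Sum>x\<in>?Y. f x) + (\<Sum>x\<in>{x\<in>X. \<phi> x = x}. f x)"
  proof -
    have "X = ?Y \<union> {x\<in>X. \<phi> x = x}" by auto
    then show ?thesis using fin by (metis (no_types, lifting) sum.union_disjoint finite_Un disjoint_iff mem_Collect_eq)
  qed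
  ultimately show ?thesis by simp
qed

lemma permutes_ascending_eq_id:
  assumes p: "\<sigma> permutes {1..m}" and mono: "\<forall>i. 1 \<le> i \<and> i < m \<longrightarrow> \<sigma> i < \<sigma> (Suc i)"
  shows "\<sigma> = id"
proof -
  have rng: "1 \<le> \<sigma> i \<and> \<sigma> i \<le> m" if "1 \<le> i" "i \<le> m" for i
    using permutes_in_image[OF p] that by auto
  have up: "i \<le> \<sigma> i" if "1 \<le> i" "i \<le> m" for i
    using that
  proof (induction i)
    case 0 then show ?case by simp
  next
    case (Suc i)
    show ?case
    proof (cases "i = 0")
      case True then show ?thesis using rng[of 1] Suc by auto
    next
      case False
      then have "i \<le> \<sigma> i" using Suc by auto
      moreover have "\<sigma> i < \<sigma> (Suc i)" using mono Suc False by auto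
      ultimately show ?thesis by simp
    qed
  qed
  have down: "\<sigma> (m - d) \<le> m - d" if "d < m" for d
    using that
  proof (induction d)
    case 0 then show ?case using rng[of m] by simp
  next
    case (Suc d)
    then have "\<sigma> (m - d) \<le> m - d" by simp
    moreover have "\<sigma> (m - Suc d) < \<sigma> (Suc (m - Suc d))" using mono Suc by auto
    moreover have "Suc (m - Suc d) = m - d" using Suc by auto
    ultimately show ?case by simp
  qed
  show ?thesis
  proof
    fix i
    show "\<sigma> i = id i"
    proof (cases "i \<in> {1..m}")
      case True
      then have "\<sigma> (m - (m - i)) \<le> m - (m - i)" using down[of "m - i"] by auto
      then show ?thesis using up[of i] True by auto
    next
      case False
      then show ?thesis using permutes_not_in[OF p False] by simp
    qed
  qed
qed

lemma cells_eq_skew_cells: "cells m lam mu = skew_cells {1..m} lam mu"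
  by (auto simp: cells_def skew_cells_def)

lemma tab_weight_eq_filling_weight: "tab_weight m lam mu a = filling_weight {1..m} lam mu a"
proof -
  let ?S = "skew_cells {1..m} lam mu"
  have "filling_weight {1..m} lam mu a
      = ((\<Sum>(i, c) \<in> ?S. if even c then {#a i c#} else {#}), (\<Sum>(i, c) \<in> ?S. if odd c then {#a i c#} else {#}))"
  proof -
    have "cell_weight c v = (if even c then {#v#} else {#}, if odd c then {#v#} else {#})" for c v
      by (simp add: cell_weight_def)
    then show ?thesis unfolding filling_weight_def split_def by (simp only: sum_prod)
  qed
  moreover have filter: "{(i, c). (i, c) \<in> ?S \<and> P c} = {x \<in> ?S. P (snd x)}" for P
    by auto
  ultimately show ?thesis
    unfolding tab_weight_def cells_eq_skew_cells filter split_def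
    by (simp add: sum.inter_filter finite_skew_cells)
qed

definition tail_swap :: "nat \<Rightarrow> (nat \<Rightarrow> int) \<Rightarrow> (nat \<Rightarrow> int) \<Rightarrow>
    (nat \<Rightarrow> nat) \<times> (nat \<Rightarrow> int \<Rightarrow> int) \<Rightarrow> (nat \<Rightarrow> nat) \<times> (nat \<Rightarrow> int \<Rightarrow> int)" where
  "tail_swap m lam mu = (\<lambda>(\<sigma>, a).
     if crossings m mu (lam \<circ> \<sigma>) a = {} then (\<sigma>, a)
     else let i = crossing_row m mu (lam \<circ> \<sigma>) a; x = crossing_col m mu (lam \<circ> \<sigma>) a
       in (\<sigma> \<circ> Transposition.transpose i (Suc i), swap_tails a i x))"

definition permuted_fillings :: "enat \<Rightarrow> nat \<Rightarrow> (nat \<Rightarrow> int) \<Rightarrow> (nat \<Rightarrow> int) \<Rightarrow> monom \<Rightarrow>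
    ((nat \<Rightarrow> nat) \<times> (nat \<Rightarrow> int \<Rightarrow> int)) set" where
  "permuted_fillings k m lam mu M = {(\<sigma>, a). \<sigma> permutes {1..m} \<and>
     a \<in> row_fillings k {1..m} (lam \<circ> \<sigma>) mu \<and> filling_weight {1..m} (lam \<circ> \<sigma>) mu a = M}"

lemma gf_det_gf_alt_signed_sum:
  assumes "\<forall>i \<in> {1..m}. even (mu i)"
  shows "finite (permuted_fillings k m lam mu M)"
    and "gf_det m (\<lambda>i j. gf_alt k (lam j - mu i)) M = (\<Sum>(\<sigma>, a) \<in> permuted_fillings k m lam mu M. sign \<sigma>)"
proof -
  define C where "C \<sigma> = {a \<in> row_fillings k {1..m} (lam \<circ> \<sigma>) mu. filling_weight {1..m} (lam \<circ> \<sigma>) mu a = M}" for \<sigma>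
  have split: "permuted_fillings k m lam mu M = Sigma {\<sigma>. \<sigma> permutes {1..m}} C"
    by (auto simp: permuted_fillings_def C_def)
  have prod_eq: "gf_prod_list (map (\<lambda>i. gf_alt k (lam (\<sigma> i) - mu i)) [1..<m+1]) M = int (card (C \<sigma>))"
    and finC: "finite (C \<sigma>)" for \<sigma>
  proof -
    have rows: "set [1..<m+1] = {1..m}" by auto
    with assms have "\<forall>r \<in> set [1..<m+1]. even (mu r)" by simp
    note gf_prod_list_gf_alt[OF distinct_upt this, of k "lam \<circ> \<sigma>", unfolded rows]
    then show "gf_prod_list (map (\<lambda>i. gf_alt k (lam (\<sigma> i) - mu i)) [1..<m+1]) M = int (card (C \<sigma>))"
      and "finite (C \<sigma>)"
      unfolding counting_gf_def finite_fibres_def C_def by (auto simp del: split_paired_All)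
  qed
  have finP: "finite {\<sigma>. \<sigma> permutes {1..m}}"
    by (rule finite_permutations) simp
  show "finite (permuted_fillings k m lam mu M)"
    unfolding split using finP finC by blast
  have "gf_det m (\<lambda>i j. gf_alt k (lam j - mu i)) M = (\<Sum>\<sigma> | \<sigma> permutes {1..m}. \<Sum>a \<in> C \<sigma>. sign \<sigma>)"
    unfolding gf_det_def prod_eq by (simp add: mult.commute)
  also have "\<dots> = (\<Sum>(\<sigma>, a) \<in> permuted_fillings k m lam mu M. sign \<sigma>)"
    unfolding split by (rule sum.Sigma) (use finP finC in auto)
  finally show "gf_det m (\<lambda>i j. gf_alt k (lam j - mu i)) M = (\<Sum>(\<sigma>, a) \<in> permuted_fillings k m lam mu M. sign \<sigma>)" .
qed

locale admissible_shape =
  fixes m :: nat and lam mu :: "nat \<Rightarrow> int"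
  assumes mu_le_lam: "\<forall>i \<in> {1..m}. mu i \<le> lam i"
    and even_mu: "\<forall>i \<in> {1..m}. even (mu i)"
    and mu_decreasing: "\<forall>i j. 1 \<le> i \<and> i < j \<and> j \<le> m \<longrightarrow> mu j < mu i"
    and lam_monotone: "((\<forall>i j. 1 \<le> i \<and> i < j \<and> j \<le> m \<longrightarrow> lam i < lam j) \<and> (\<forall>i \<in> {1..m}. odd (lam i)))
       \<or> ((\<forall>i j. 1 \<le> i \<and> i < j \<and> j \<le> m \<longrightarrow> lam j < lam i) \<and> (\<forall>i \<in> {1..m}. even (lam i)))"
begin

lemma row_filling_permuted: "\<sigma> permutes {1..m} \<Longrightarrow> a \<in> row_fillings k {1..m} (lam \<circ> \<sigma>) mu \<Longrightarrow> row_filling k m mu (lam \<circ> \<sigma>) a"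
proof (unfold_locales)
  assume p: "\<sigma> permutes {1..m}" and c: "a \<in> row_fillings k {1..m} (lam \<circ> \<sigma>) mu"
  show "\<And>j. 1 \<le> j \<Longrightarrow> j \<le> m \<Longrightarrow> even (mu j)" using even_mu by auto
  show "\<And>j. 1 \<le> j \<Longrightarrow> j < m \<Longrightarrow> mu (Suc j) < mu j" using mu_decreasing by auto
  show "a \<in> row_fillings k {1..m} (lam \<circ> \<sigma>) mu" by (rule c)
  have sr: "\<sigma> j \<in> {1..m}" if "j \<in> {1..m}" for j using permutes_in_image[OF p] that by auto
  show "(\<forall>j\<in>{1..m}. odd ((lam \<circ> \<sigma>) j) \<and> (\<forall>i\<in>{1..m}. mu i \<le> (lam \<circ> \<sigma>) j)) \<or> (\<forall>j\<in>{1..m}. even ((lam \<circ> \<sigma>) j))"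
    using lam_monotone
  proof
    assume A: "(\<forall>i j. 1 \<le> i \<and> i < j \<and> j \<le> m \<longrightarrow> lam i < lam j) \<and> (\<forall>i \<in> {1..m}. odd (lam i))"
    have "mu i \<le> lam j" if "i \<in> {1..m}" "j \<in> {1..m}" for i j
    proof -
      have "mu i \<le> mu 1"
      proof (cases "i = 1")
        case False then show ?thesis using mu_decreasing[rule_format, of 1 i] that by auto
      qed simp
      also have "mu 1 \<le> lam 1" using mu_le_lam that by auto
      also have "lam 1 \<le> lam j"
      proof (cases "j = 1")
        case False then show ?thesis using A[THEN conjunct1, rule_format, of 1 j] that by auto
      qed simp
      finally show ?thesis .
    qed
    then show ?thesis using A sr by auto
  next
    assume B: "(\<forall>i j. 1 \<le> i \<and> i < j \<and> j \<le> m \<longrightarrow> lam j < lam i) \<and> (\<forall>i \<in> {1..m}. even (lam i))"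
    then show ?thesis using sr by auto
  qed
qed

lemma tail_swap_crossing:
  assumes p: "\<sigma> permutes {1..m}" and c: "a \<in> row_fillings k {1..m} (lam \<circ> \<sigma>) mu" and ne: "crossings m mu (lam \<circ> \<sigma>) a \<noteq> {}"
  defines "i0 \<equiv> crossing_row m mu (lam \<circ> \<sigma>) a" and "x0 \<equiv> crossing_col m mu (lam \<circ> \<sigma>) a"
  defines "\<sigma>' \<equiv> \<sigma> \<circ> Transposition.transpose i0 (Suc i0)" and "a' \<equiv> swap_tails a i0 x0"
  shows "tail_swap m lam mu (\<sigma>, a) = (\<sigma>', a')" "\<sigma>' permutes {1..m}" "a' \<in> row_fillings k {1..m} (lam \<circ> \<sigma>') mu"
    "filling_weight {1..m} (lam \<circ> \<sigma>') mu a' = filling_weight {1..m} (lam \<circ> \<sigma>) mu a"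
    "crossings m mu (lam \<circ> \<sigma>') a' \<noteq> {}" "crossing_row m mu (lam \<circ> \<sigma>') a' = i0" "crossing_col m mu (lam \<circ> \<sigma>') a' = x0"
    "sign \<sigma>' = - sign \<sigma>" "\<sigma>' \<noteq> \<sigma>"
proof -
  interpret crossing_filling k m mu "lam \<circ> \<sigma>" a
    using row_filling_permuted[OF p c] ne by (simp add: crossing_filling_def crossing_filling_axioms_def)
  have eq: "lam \<circ> \<sigma>' = (lam \<circ> \<sigma>) \<circ> Transposition.transpose i0 (Suc i0)"
    unfolding \<sigma>'_def by (simp add: o_assoc)
  have r: "1 \<le> i0" "i0 < m" using i0_range unfolding i0_def by auto
  show "tail_swap m lam mu (\<sigma>, a) = (\<sigma>', a')" unfolding tail_swap_def Let_def \<sigma>'_def a'_def i0_def x0_def using ne by simp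
  have tp: "Transposition.transpose i0 (Suc i0) permutes {1..m}" using r by (intro permutes_swap_id) auto
  show "\<sigma>' permutes {1..m}" unfolding \<sigma>'_def by (rule permutes_compose[OF tp p])
  show "a' \<in> row_fillings k {1..m} (lam \<circ> \<sigma>') mu" unfolding eq a'_def i0_def x0_def using swap_tails_in_row_fillings .
  show "filling_weight {1..m} (lam \<circ> \<sigma>') mu a' = filling_weight {1..m} (lam \<circ> \<sigma>) mu a"
    unfolding eq a'_def i0_def x0_def using filling_weight_swap_tails by simp
  show "crossings m mu (lam \<circ> \<sigma>') a' \<noteq> {}" "crossing_row m mu (lam \<circ> \<sigma>') a' = i0" "crossing_col m mu (lam \<circ> \<sigma>') a' = x0"
    unfolding eq a'_def i0_def x0_def using crossing_col_swap_tails crossing_row_swap_tails by simp_all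
  have "sign \<sigma>' = sign \<sigma> * sign (Transposition.transpose i0 (Suc i0))"
    unfolding \<sigma>'_def by (rule sign_compose[OF permutes_imp_permutation[OF _ p] permutation_swap_id]) simp
  then show "sign \<sigma>' = - sign \<sigma>" by (simp add: sign_swap_id)
  have "\<sigma>' i0 = \<sigma> (Suc i0)" unfolding \<sigma>'_def by simp
  moreover have "\<sigma> (Suc i0) \<noteq> \<sigma> i0" using injD[OF permutes_inj[OF p]] by (metis n_not_Suc_n)
  ultimately show "\<sigma>' \<noteq> \<sigma>" by auto
qed

lemma tail_swap_tail_swap:
  assumes p: "\<sigma> permutes {1..m}" and c: "a \<in> row_fillings k {1..m} (lam \<circ> \<sigma>) mu"
  shows "tail_swap m lam mu (tail_swap m lam mu (\<sigma>, a)) = (\<sigma>, a)"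
proof (cases "crossings m mu (lam \<circ> \<sigma>) a = {}")
  case True
  then show ?thesis unfolding tail_swap_def Let_def by simp
next
  case False
  note B = tail_swap_crossing[OF p c False]
  let ?i0 = "crossing_row m mu (lam \<circ> \<sigma>) a" and ?x0 = "crossing_col m mu (lam \<circ> \<sigma>) a"
  have "tail_swap m lam mu (tail_swap m lam mu (\<sigma>, a)) = (\<sigma> \<circ> Transposition.transpose ?i0 (Suc ?i0) \<circ> Transposition.transpose ?i0 (Suc ?i0),
      swap_tails (swap_tails a ?i0 ?x0) ?i0 ?x0)"
    unfolding B(1) using B(5,6,7) unfolding tail_swap_def Let_def by simp
  also have "\<dots> = (\<sigma>, a)" by (simp add: swap_tails_swap_tails comp_assoc)
  finally show ?thesis .
qed


lemma crossing_inside_shape: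
  assumes j: "1 \<le> j" "j < m" and crossing: "crosses mu lam a j x"
  shows "(j, odd_col x) \<in> skew_cells {1..m} lam mu" and "(Suc j, even_col x) \<in> skew_cells {1..m} lam mu"
    and "a j (odd_col x) \<le> a (Suc j) (even_col x)"
proof -
  have bounds: "mu j \<le> odd_col x" "odd_col x \<le> lam j + 1" "mu (Suc j) \<le> even_col x" "even_col x \<le> lam (Suc j) + 1"
    and weak: "odd_col x = lam j + 1 \<or> even_col x = mu (Suc j) \<or> even_col x = lam (Suc j) + 1
      \<or> a j (odd_col x) \<le> a (Suc j) (even_col x)"
    using crossing unfolding crosses_def by auto
  have parity: "odd (odd_col x)" "even (even_col x)" "\<bar>even_col x - odd_col x\<bar> = 1"
    unfolding odd_col_def even_col_def by auto
  have mu_j: "even (mu j)" "even (mu (Suc j))" "mu (Suc j) < mu j"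
    using even_mu mu_decreasing j by auto
  have "odd_col x \<noteq> lam j + 1"
  proof
    assume end_j: "odd_col x = lam j + 1"
    then have "even (lam j)" using parity by simp
    then have "lam (Suc j) < lam j" "even (lam (Suc j))"
      using lam_monotone j by auto
    with \<open>even (lam j)\<close> have "lam (Suc j) + 2 \<le> lam j" by presburger
    then show False using bounds end_j parity by linarith
  qed
  moreover have "even_col x \<noteq> mu (Suc j)"
  proof
    assume "even_col x = mu (Suc j)"
    moreover have "mu (Suc j) + 2 \<le> mu j" using mu_j by presburger
    ultimately show False using bounds parity by linarith
  qed
  moreover have "even_col x \<noteq> lam (Suc j) + 1"
  proof
    assume end_Suc_j: "even_col x = lam (Suc j) + 1"
    then have "odd (lam (Suc j))" using parity by simp
    then have "lam j < lam (Suc j)" "odd (lam j)"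
      using lam_monotone j by auto
    with \<open>odd (lam (Suc j))\<close> have "lam j + 2 \<le> lam (Suc j)" by presburger
    then show False using bounds end_Suc_j parity by linarith
  qed
  moreover have "mu j \<noteq> odd_col x" using mu_j parity by auto
  ultimately show "(j, odd_col x) \<in> skew_cells {1..m} lam mu" "(Suc j, even_col x) \<in> skew_cells {1..m} lam mu"
    "a j (odd_col x) \<le> a (Suc j) (even_col x)"
    using bounds weak j by (auto simp: skew_cells_def)
qed

lemma alt_tableaux_eq_crossing_free:
  "alt_tableaux k m lam mu = {a \<in> row_fillings k {1..m} lam mu. crossings m mu lam a = {}}"
proof -
  let ?cells = "skew_cells {1..m} lam mu"
  let ?below_left = "\<lambda>a. \<forall>i c. odd c \<and> (i, c) \<in> ?cells \<and> (i + 1, c - 1) \<in> ?cells \<longrightarrow> a (i + 1) (c - 1) < a i c"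
  let ?below_right = "\<lambda>a. \<forall>i c. odd c \<and> (i, c) \<in> ?cells \<and> (i + 1, c + 1) \<in> ?cells \<longrightarrow> a (i + 1) (c + 1) < a i c"
  have tableau_iff: "a \<in> alt_tableaux k m lam mu \<longleftrightarrow> a \<in> row_fillings k {1..m} lam mu \<and> ?below_left a \<and> ?below_right a" for a
    unfolding alt_tableaux_def row_fillings_def cells_eq_skew_cells using mu_le_lam by auto
  have "crossings m mu lam a = {} \<longleftrightarrow> ?below_left a \<and> ?below_right a" for a
  proof
    assume "crossings m mu lam a = {}"
    then have no_crossing: "\<not> crosses mu lam a i x" if "(i, c) \<in> ?cells" "(i + 1, c') \<in> ?cells" for i c c' x
      using that unfolding crossings_def skew_cells_def by auto
    show "?below_left a \<and> ?below_right a"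
    proof (intro conjI allI impI; rule ccontr)
      fix i c assume "odd c \<and> (i, c) \<in> ?cells \<and> (i + 1, c - 1) \<in> ?cells" "\<not> a (i + 1) (c - 1) < a i c"
      then show False
        using no_crossing[of i c "c - 1" "c - 1"] by (auto simp: crosses_def odd_col_def even_col_def skew_cells_def)
    next
      fix i c assume "odd c \<and> (i, c) \<in> ?cells \<and> (i + 1, c + 1) \<in> ?cells" "\<not> a (i + 1) (c + 1) < a i c"
      then show False
        using no_crossing[of i c "c + 1" c] by (auto simp: crosses_def odd_col_def even_col_def skew_cells_def)
    qed
  next
    assume strict: "?below_left a \<and> ?below_right a"
    show "crossings m mu lam a = {}"
    proof (rule ccontr)
      assume "crossings m mu lam a \<noteq> {}"
      then obtain j x where j: "1 \<le> j" "j < m" and crossing: "crosses mu lam a j x"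
        unfolding crossings_def by auto
      have "odd (odd_col x)" "even_col x = odd_col x + 1 \<or> even_col x = odd_col x - 1"
        unfolding odd_col_def even_col_def by auto
      then show False
        using strict crossing_inside_shape[OF j crossing] by fastforce
    qed
  qed
  then show ?thesis using tableau_iff by auto
qed

lemma crossing_if_not_id:
  assumes p: "\<sigma> permutes {1..m}" and c: "a \<in> row_fillings k {1..m} (lam \<circ> \<sigma>) mu" and ni: "\<sigma> \<noteq> id"
  shows "crossings m mu (lam \<circ> \<sigma>) a \<noteq> {}"
proof -
  interpret row_filling k m mu "lam \<circ> \<sigma>" a by (rule row_filling_permuted[OF p c])
  obtain i where i: "1 \<le> i" "i < m" "\<not> \<sigma> i < \<sigma> (Suc i)" using permutes_ascending_eq_id[OF p] ni by blast
  have "\<sigma> i \<noteq> \<sigma> (Suc i)" using injD[OF permutes_inj[OF p]] by (metis n_not_Suc_n)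
  then have lt: "\<sigma> (Suc i) < \<sigma> i" using i by auto
  have sr: "1 \<le> \<sigma> j \<and> \<sigma> j \<le> m" if "1 \<le> j" "j \<le> m" for j using permutes_in_image[OF p, of j] that by auto
  have ge: "mu i \<le> lam (\<sigma> i)" "mu (Suc i) \<le> lam (\<sigma> (Suc i))" using mu_le_e[of i] mu_le_e[of "Suc i"] i by auto
  have md: "mu (Suc i) < mu i" using mu_dec i by auto
  \<comment> \<open>at the descent \<open>i\<close> of \<open>\<sigma>\<close> one of the rows \<open>i\<close>, \<open>i + 1\<close> ends before the other, at a crossing\<close>
  show ?thesis using lam_monotone
  proof
    assume A: "(\<forall>i j. 1 \<le> i \<and> i < j \<and> j \<le> m \<longrightarrow> lam i < lam j) \<and> (\<forall>i \<in> {1..m}. odd (lam i))"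
    have lt2: "lam (\<sigma> (Suc i)) < lam (\<sigma> i)" using A lt sr[of i] sr[of "Suc i"] i by auto
    have od: "odd (lam (\<sigma> (Suc i)))" using A sr[of "Suc i"] i by auto
    have "\<forall>j\<in>{1..m}. odd ((lam \<circ> \<sigma>) j) \<and> (\<forall>i\<in>{1..m}. mu i \<le> (lam \<circ> \<sigma>) j)"
      using ends_parity od i by auto
    then have "mu i \<le> lam (\<sigma> (Suc i))" using i by auto
    then have "crosses mu (lam \<circ> \<sigma>) a i (lam (\<sigma> (Suc i)))"
      unfolding crosses_def odd_col_def even_col_def using od lt2 ge by auto
    then show ?thesis using i unfolding crossings_def by auto
  next
    assume B: "(\<forall>i j. 1 \<le> i \<and> i < j \<and> j \<le> m \<longrightarrow> lam j < lam i) \<and> (\<forall>i \<in> {1..m}. even (lam i))"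
    have lt2: "lam (\<sigma> i) < lam (\<sigma> (Suc i))" using B lt sr[of i] sr[of "Suc i"] i by auto
    have ev: "even (lam (\<sigma> i))" using B sr[of i] i by auto
    have "crosses mu (lam \<circ> \<sigma>) a i (lam (\<sigma> i))"
      unfolding crosses_def odd_col_def even_col_def using ev lt2 ge md by auto
    then show ?thesis using i unfolding crossings_def by auto
  qed
qed

lemma tail_swap_permuted_fillings:
  assumes x: "x \<in> permuted_fillings k m lam mu M"
  shows "tail_swap m lam mu x \<in> permuted_fillings k m lam mu M"
    and "tail_swap m lam mu (tail_swap m lam mu x) = x"
    and "tail_swap m lam mu x \<noteq> x \<Longrightarrow> sign (fst (tail_swap m lam mu x)) = - sign (fst x)"
proof -
  obtain \<sigma> a where x_eq: "x = (\<sigma>, a)" by fastforce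
  have p: "\<sigma> permutes {1..m}" and a: "a \<in> row_fillings k {1..m} (lam \<circ> \<sigma>) mu"
    and w: "filling_weight {1..m} (lam \<circ> \<sigma>) mu a = M"
    using x unfolding x_eq permuted_fillings_def by auto
  show "tail_swap m lam mu (tail_swap m lam mu x) = x"
    unfolding x_eq by (rule tail_swap_tail_swap[OF p a])
  show "tail_swap m lam mu x \<in> permuted_fillings k m lam mu M"
  proof (cases "crossings m mu (lam \<circ> \<sigma>) a = {}")
    case True
    then show ?thesis using x unfolding x_eq tail_swap_def by simp
  next
    case False
    note swap = tail_swap_crossing[OF p a False]
    show ?thesis unfolding x_eq swap(1) permuted_fillings_def using swap(2,3,4) w by simp
  qed
  assume "tail_swap m lam mu x \<noteq> x"
  then have "crossings m mu (lam \<circ> \<sigma>) a \<noteq> {}" unfolding x_eq tail_swap_def by auto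
  note swap = tail_swap_crossing[OF p a this]
  show "sign (fst (tail_swap m lam mu x)) = - sign (fst x)" unfolding x_eq swap(1) using swap(8) by simp
qed

lemma tail_swap_fixpoints:
  "{x \<in> permuted_fillings k m lam mu M. tail_swap m lam mu x = x}
    = {id :: nat \<Rightarrow> nat} \<times> {a \<in> alt_tableaux k m lam mu. tab_weight m lam mu a = M}"
proof (intro set_eqI iffI)
  fix x assume x: "x \<in> {x \<in> permuted_fillings k m lam mu M. tail_swap m lam mu x = x}"
  obtain \<sigma> a where x_eq: "x = (\<sigma>, a)" by fastforce
  have p: "\<sigma> permutes {1..m}" and a: "a \<in> row_fillings k {1..m} (lam \<circ> \<sigma>) mu"
    and w: "filling_weight {1..m} (lam \<circ> \<sigma>) mu a = M" and fixed: "tail_swap m lam mu (\<sigma>, a) = (\<sigma>, a)"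
    using x unfolding x_eq permuted_fillings_def by auto
  have no_crossing: "crossings m mu (lam \<circ> \<sigma>) a = {}"
    using tail_swap_crossing(1,9)[OF p a] fixed by auto
  then have "\<sigma> = id" using crossing_if_not_id[OF p a] by auto
  then show "x \<in> {id :: nat \<Rightarrow> nat} \<times> {a \<in> alt_tableaux k m lam mu. tab_weight m lam mu a = M}"
    using no_crossing a w unfolding x_eq
    by (simp add: alt_tableaux_eq_crossing_free tab_weight_eq_filling_weight)
next
  fix x assume "x \<in> {id :: nat \<Rightarrow> nat} \<times> {a \<in> alt_tableaux k m lam mu. tab_weight m lam mu a = M}"
  then obtain a where x_eq: "x = (id, a)" and "a \<in> alt_tableaux k m lam mu" "tab_weight m lam mu a = M"
    by auto
  then show "x \<in> {x \<in> permuted_fillings k m lam mu M. tail_swap m lam mu x = x}"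
    by (simp add: permuted_fillings_def tail_swap_def alt_tableaux_eq_crossing_free
        tab_weight_eq_filling_weight permutes_id)
qed

lemma gf_tab_eq_gf_det: "gf_tab k m lam mu = gf_det m (\<lambda>i j. gf_alt k (lam j - mu i))"
proof
  fix M
  let ?X = "permuted_fillings k m lam mu M"
  let ?T = "{a \<in> alt_tableaux k m lam mu. tab_weight m lam mu a = M}"
  have "gf_det m (\<lambda>i j. gf_alt k (lam j - mu i)) M = (\<Sum>x \<in> ?X. sign (fst x))"
    using gf_det_gf_alt_signed_sum(2)[OF even_mu] by (simp add: case_prod_beta)
  also have "\<dots> = (\<Sum>x \<in> {x \<in> ?X. tail_swap m lam mu x = x}. sign (fst x))"
    by (rule sum_eq_sum_fixpoints_involution[OF gf_det_gf_alt_signed_sum(1)[OF even_mu]])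
      (use tail_swap_permuted_fillings in auto)
  also have "\<dots> = (\<Sum>x \<in> {id :: nat \<Rightarrow> nat} \<times> ?T. sign (fst x))"
    unfolding tail_swap_fixpoints ..
  also have "\<dots> = (\<Sum>x \<in> {id :: nat \<Rightarrow> nat} \<times> ?T. 1)"
    by (rule sum.cong) (auto simp: sign_id)
  also have "\<dots> = int (card ?T)"
    by (simp add: card_cartesian_product_singleton)
  finally show "gf_tab k m lam mu M = gf_det m (\<lambda>i j. gf_alt k (lam j - mu i)) M"
    unfolding gf_tab_def by simp
qed

end

theorem theorem46:
  fixes k :: enat and m :: nat and lam mu :: "nat \<Rightarrow> int"
  assumes "k \<ge> 1"
    and "m \<ge> 1"
    and "\<forall>i \<in> {1..m}. mu i \<le> lam i"
    and "\<forall>i \<in> {1..m}. even (mu i)"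
    and "\<forall>i j. 1 \<le> i \<and> i < j \<and> j \<le> m \<longrightarrow> mu j < mu i"
    and "((\<forall>i j. 1 \<le> i \<and> i < j \<and> j \<le> m \<longrightarrow> lam i < lam j) \<and> (\<forall>i \<in> {1..m}. odd (lam i)))
       \<or> ((\<forall>i j. 1 \<le> i \<and> i < j \<and> j \<le> m \<longrightarrow> lam j < lam i) \<and> (\<forall>i \<in> {1..m}. even (lam i)))"
  shows "gf_tab k m lam mu = gf_det m (\<lambda>i j. gf_alt k (lam j - mu i))"
proof -
  interpret admissible_shape m lam mu
    using assms(3-6) by unfold_locales
  show ?thesis by (rule gf_tab_eq_gf_det)
qed

end
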